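(* Let $f\in\mathbb{C}[h]$, $\lambda\in S_f$ and $\dot z\in\mathbb{C}$. (1) The formulas defining $A_{\mathcal{H}(f)}(\lambda,\dot z)$ and $B_{\mathcal{H}(f)}(\lambda,\dot z)$ give $\mathcal{H}(f)$-module structures on $\mathbb{C}[t,t^{-1}]$. (2) $A_{\mathcal{H}(f)}(\lambda,\dot z)$ (resp. $B_{\mathcal{H}(f)}(\lambda,\dot z)$) is a simple $\mathcal{H}(f)$-module if and only if $\lambda(i)+\dot z\neq 0$ for all $i\in\mathbb{Z}$ and $|\lambda|=0$. (3) Suppose $\lambda(i)+\dot z\neq 0$ for all $i\in\mathbb{Z}$ and $m=|\lambda|\neq 0$. Then every nonzero submodule of $A_{\mathcal{H}(f)}(\lambda,\dot z)$ (resp. $B_{\mathcal{H}(f)}(\lambda,\dot z)$) equals $\mathbb{C}[t,t^{-1}]g(t)$ for some nonzero $g(t)\in\mathbb{C}[t^m]$ which is an eigenvector of $h$. In particular, every maximal proper nonzero submodule of $A_{\mathcal{H}(f)}(\lambda,\dot z)$ equals $\mathbb{C}[t,t^{-1}](t^m-a)$ for some $a\in\mathbb{C}^*$.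
   Context: For $f(h)\in\mathbb{C}[h]$, $\mathcal{H}(f)$ is the unital associative $\mathbb{C}$-algebra generated by $x,y,h$ with relations $hx=xf(h)$, $yh=f(h)y$, $yx-xy=f(h)-h$. $S_f$ is the set of maps $\lambda:\mathbb{Z}\to\mathbb{C}$ with $f(\lambda(i))=\lambda(i+1)$ for all $i$; $|\lambda|$ is the nonnegative generator of the subgroup $\{m\in\mathbb{Z}\mid\lambda(i+m)=\lambda(i)\ \forall i\}$. For $\lambda\in S_f$, $\dot z\in\mathbb{C}$: $A_{\mathcal{H}(f)}(\lambda,\dot z)$ is the space $\mathbb{C}[t,t^{-1}]$ with $ht^i=\lambda(i)t^i$, $xt^i=t^{i+1}$, $yt^i=(\lambda(i)+\dot z)t^{i-1}$; $B_{\mathcal{H}(f)}(\lambda,\dot z)$ is the space $\mathbb{C}[t,t^{-1}]$ with $ht^i=\lambda(i)t^i$, $xt^i=(\lambda(i+1)+\dot z)t^{i+1}$, $yt^i=t^{i-1}$ ($i\in\mathbb{Z}$). *)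

theory Defs
  imports "HOL-Computational_Algebra.Polynomial" "HOL-Library.Poly_Mapping"
begin

text \<open>Laurent polynomials C[t,t^-1]: finitely supported maps int => complex;
  the basis element t^i is Poly_Mapping.single i 1, and the ring multiplication
  of the type is convolution, i.e. the product of Laurent polynomials.\<close>

type_synonym laurent = "int \<Rightarrow>\<^sub>0 complex"

definition lt :: "int \<Rightarrow> laurent" where
  "lt i = Poly_Mapping.single i 1"

definition lsmult :: "complex \<Rightarrow> laurent \<Rightarrow> laurent" where
  "lsmult c p = Poly_Mapping.map (\<lambda>a. c * a) p"

definition S :: "complex poly \<Rightarrow> (int \<Rightarrow> complex) set" where
  "S f = {lam. \<forall>i. poly f (lam i) = lam (i + 1)}"

definition period :: "(int \<Rightarrow> complex) \<Rightarrow> nat" where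
  "period lam = (THE n. {m::int. \<forall>i. lam (i + m) = lam i} = {k * int n | k. True})"

definition A_h :: "(int \<Rightarrow> complex) \<Rightarrow> laurent \<Rightarrow> laurent" where
  "A_h lam p = (\<Sum>i\<in>Poly_Mapping.keys p. lsmult (Poly_Mapping.lookup p i * lam i) (lt i))"

definition A_x :: "(int \<Rightarrow> complex) \<Rightarrow> complex \<Rightarrow> laurent \<Rightarrow> laurent" where
  "A_x lam z p = (\<Sum>i\<in>Poly_Mapping.keys p. lsmult (Poly_Mapping.lookup p i) (lt (i + 1)))"

definition A_y :: "(int \<Rightarrow> complex) \<Rightarrow> complex \<Rightarrow> laurent \<Rightarrow> laurent" where
  "A_y lam z p = (\<Sum>i\<in>Poly_Mapping.keys p. lsmult (Poly_Mapping.lookup p i * (lam i + z)) (lt (i - 1)))"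

definition B_h :: "(int \<Rightarrow> complex) \<Rightarrow> laurent \<Rightarrow> laurent" where
  "B_h lam p = (\<Sum>i\<in>Poly_Mapping.keys p. lsmult (Poly_Mapping.lookup p i * lam i) (lt i))"

definition B_x :: "(int \<Rightarrow> complex) \<Rightarrow> complex \<Rightarrow> laurent \<Rightarrow> laurent" where
  "B_x lam z p = (\<Sum>i\<in>Poly_Mapping.keys p. lsmult (Poly_Mapping.lookup p i * (lam (i + 1) + z)) (lt (i + 1)))"

definition B_y :: "(int \<Rightarrow> complex) \<Rightarrow> complex \<Rightarrow> laurent \<Rightarrow> laurent" where
  "B_y lam z p = (\<Sum>i\<in>Poly_Mapping.keys p. lsmult (Poly_Mapping.lookup p i) (lt (i - 1)))"

definition clinear_op :: "(laurent \<Rightarrow> laurent) \<Rightarrow> bool" where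
  "clinear_op T \<longleftrightarrow> (\<forall>p q. T (p + q) = T p + T q) \<and> (\<forall>c p. T (lsmult c p) = lsmult c (T p))"

definition op_poly :: "complex poly \<Rightarrow> (laurent \<Rightarrow> laurent) \<Rightarrow> laurent \<Rightarrow> laurent" where
  "op_poly f T p = (\<Sum>k\<le>degree f. lsmult (coeff f k) ((T ^^ k) p))"

text \<open>An H(f)-module structure on C[t,t^-1] is the same as linear operators X, Y, H
  (the actions of x, y, h) satisfying the defining relations of H(f):
  hx = x f(h), yh = f(h) y, yx - xy = f(h) - h.\<close>
definition Hf_module :: "complex poly \<Rightarrow> (laurent \<Rightarrow> laurent) \<Rightarrow> (laurent \<Rightarrow> laurent)
    \<Rightarrow> (laurent \<Rightarrow> laurent) \<Rightarrow> bool" where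
  "Hf_module f X Y H \<longleftrightarrow> clinear_op X \<and> clinear_op Y \<and> clinear_op H \<and>
     (\<forall>p. H (X p) = X (op_poly f H p)) \<and>
     (\<forall>p. Y (H p) = op_poly f H (Y p)) \<and>
     (\<forall>p. Y (X p) - X (Y p) = op_poly f H p - H p)"

definition Hf_submodule :: "(laurent \<Rightarrow> laurent) \<Rightarrow> (laurent \<Rightarrow> laurent)
    \<Rightarrow> (laurent \<Rightarrow> laurent) \<Rightarrow> laurent set \<Rightarrow> bool" where
  "Hf_submodule X Y H W \<longleftrightarrow> 0 \<in> W \<and> (\<forall>p\<in>W. \<forall>q\<in>W. p + q \<in> W) \<and>
     (\<forall>c. \<forall>p\<in>W. lsmult c p \<in> W) \<and> (\<forall>p\<in>W. X p \<in> W \<and> Y p \<in> W \<and> H p \<in> W)"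

definition simple_Hf_module :: "complex poly \<Rightarrow> (laurent \<Rightarrow> laurent) \<Rightarrow> (laurent \<Rightarrow> laurent)
    \<Rightarrow> (laurent \<Rightarrow> laurent) \<Rightarrow> bool" where
  "simple_Hf_module f X Y H \<longleftrightarrow> Hf_module f X Y H \<and> (UNIV :: laurent set) \<noteq> {0} \<and>
     (\<forall>W. Hf_submodule X Y H W \<longrightarrow> W = {0} \<or> W = UNIV)"

definition maximal_proper_nonzero_submodule :: "(laurent \<Rightarrow> laurent) \<Rightarrow> (laurent \<Rightarrow> laurent)
    \<Rightarrow> (laurent \<Rightarrow> laurent) \<Rightarrow> laurent set \<Rightarrow> bool" where
  "maximal_proper_nonzero_submodule X Y H W \<longleftrightarrow>
     Hf_submodule X Y H W \<and> W \<noteq> {0} \<and> W \<noteq> UNIV \<and>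
     (\<forall>W'. Hf_submodule X Y H W' \<and> W' \<noteq> UNIV \<and> W \<subseteq> W' \<longrightarrow> W' = W)"

definition in_C_tm :: "nat \<Rightarrow> laurent \<Rightarrow> bool" where
  "in_C_tm m g \<longleftrightarrow> (\<forall>i\<in>Poly_Mapping.keys g. i \<ge> 0 \<and> int m dvd i)"

definition h_eigenvector :: "(laurent \<Rightarrow> laurent) \<Rightarrow> laurent \<Rightarrow> bool" where
  "h_eigenvector H g \<longleftrightarrow> g \<noteq> 0 \<and> (\<exists>c. H g = lsmult c g)"

end

theory Submission
  imports Defs "HOL-Computational_Algebra.Fundamental_Theorem_Algebra"
begin

text \<open>In both modules h acts diagonally on the basis t^i with weight lam i, while x and y
  shift the degree by one with coefficients whose product is lam i + z; the defining relations
  of H(f) then reduce to lam (i + 1) = f (lam i).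

  If some lam i + z vanishes, the span of the t^j on one side of i is a proper submodule; if
  lam has period m > 0, so is the ideal generated by t^m - 1. Conversely, if lam is not
  periodic, two distinct degrees of a vector can be separated by an operator
  x^k (h - c) y^k, so every nonzero submodule contains some t^i and hence everything.

  If lam has period m > 0 and lam + z never vanishes, x^m and y^m act as nonzero multiples of
  t^m and t^-m, and x or y is multiplication by t or t^-1. So every submodule is an ideal of
  C[t,t^-1], generated by any nonzero element of shortest support; stability under h forces
  that generator to be an eigenvector of h, hence to lie in C[t^m]. A maximal submodule is
  generated by a linear factor t^m - a of it.\<close>

section \<open>Laurent polynomials\<close>

abbreviation lcoeff :: "laurent \<Rightarrow> int \<Rightarrow> complex" where
  "lcoeff \<equiv> Poly_Mapping.lookup"

lemma lcoeff_lsmult [simp]: "lcoeff (lsmult c p) j = c * lcoeff p j"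
  unfolding lsmult_def by (simp add: Poly_Mapping.map.rep_eq when_def)

lemma lsmult_eq_single_mult: "lsmult c p = Poly_Mapping.single 0 c * p"
  unfolding lsmult_def by (rule mult_map_scale_conv_mult)

lemma lsmult_lsmult [simp]: "lsmult c (lsmult d p) = lsmult (c * d) p"
  by (rule poly_mapping_eqI) simp

lemma lsmult_1 [simp]: "lsmult 1 p = p"
  by (rule poly_mapping_eqI) simp

lemma lcoeff_lt: "lcoeff (lt i) j = (if i = j then 1 else 0)"
  unfolding lt_def by (simp add: lookup_single when_def)

lemma lt_nonzero: "lt i \<noteq> 0"
  by (metis lcoeff_lt lookup_zero one_neq_zero)

lemma lt_0: "lt 0 = 1"
  by (simp add: lt_def)

lemma lt_mult_lt: "lt i * lt j = lt (i + j)"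
  by (simp add: lt_def mult_single)

lemma lsmult_0 [simp]: "lsmult 0 p = 0"
  by (rule poly_mapping_eqI) simp

lemma lsmult_add_left: "lsmult (c + d) p = lsmult c p + lsmult d p"
  by (rule poly_mapping_eqI) (simp add: lookup_add distrib_right)

lemma lsmult_sum: "lsmult c (sum f A) = (\<Sum>k\<in>A. lsmult c (f k))"
  by (simp add: lsmult_eq_single_mult sum_distrib_left)

lemma lt_mult_funpow: "((*) (lt d) ^^ k) w = lt (int k * d) * w"
  by (induction k) (simp_all add: lt_0 lt_mult_lt mult.assoc[symmetric] distrib_right)

lemma mult_lt_minus_lsmult: "p * (lt m - lsmult c (lt 0)) = lt m * p - lsmult c p"
  by (simp add: lsmult_eq_single_mult lt_def mult_single algebra_simps)

lemma lcoeff_lt_mult: "lcoeff (lt d * p) j = lcoeff p (j - d)"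
proof -
  have "lcoeff (lt d * p) j = Sum_any (\<lambda>i. lcoeff p i when j = d + i)"
    unfolding lt_def lookup_mult lookup_single by (simp add: when_mult)
  also have "\<dots> = Sum_any (\<lambda>i. lcoeff p i when i = j - d)"
    by (rule Sum_any.cong) (auto simp: when_def)
  finally show ?thesis by simp
qed

lemma lcoeff_mult_lt: "lcoeff (p * lt d) j = lcoeff p (j - d)"
  by (subst mult.commute) (rule lcoeff_lt_mult)

lemma keys_lt_mult: "Poly_Mapping.keys (lt d * p) = (\<lambda>i. i + d) ` Poly_Mapping.keys p"
  by (force simp: in_keys_iff lcoeff_lt_mult image_iff)

lemma lcoeff_sum_lsmult_lt:
  "lcoeff (\<Sum>i\<in>Poly_Mapping.keys p. lsmult (c i) (lt (i + d))) j
     = (if j - d \<in> Poly_Mapping.keys p then c (j - d) else 0)"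
proof -
  have "lcoeff (lsmult (c i) (lt (i + d))) j = (if i = j - d then c i else 0)" for i
    by (auto simp: lcoeff_lt)
  then show ?thesis by (simp add: lookup_sum sum.delta')
qed

lemma laurent_expansion: "p = (\<Sum>i\<in>Poly_Mapping.keys p. lsmult (lcoeff p i) (lt i))"
  using lcoeff_sum_lsmult_lt[where c="lcoeff p" and p=p and d=0]
  by (intro poly_mapping_eqI) (simp add: in_keys_iff)

lemma lcoeff_A_x: "lcoeff (A_x lam z p) j = lcoeff p (j - 1)"
  using lcoeff_sum_lsmult_lt[where c="lcoeff p" and p=p and d=1 and j=j]
  by (auto simp: A_x_def in_keys_iff)

lemma lcoeff_A_y: "lcoeff (A_y lam z p) j = (lam (j + 1) + z) * lcoeff p (j + 1)"
  using lcoeff_sum_lsmult_lt[where c="\<lambda>i. lcoeff p i * (lam i + z)" and p=p and d="-1" and j=j]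
  by (auto simp: A_y_def in_keys_iff)

lemma lcoeff_A_h: "lcoeff (A_h lam p) j = lam j * lcoeff p j"
  using lcoeff_sum_lsmult_lt[where c="\<lambda>i. lcoeff p i * lam i" and p=p and d=0 and j=j]
  by (auto simp: A_h_def in_keys_iff)

lemma lcoeff_B_x: "lcoeff (B_x lam z p) j = (lam j + z) * lcoeff p (j - 1)"
  using lcoeff_sum_lsmult_lt[where c="\<lambda>i. lcoeff p i * (lam (i + 1) + z)" and p=p and d=1 and j=j]
  by (auto simp: B_x_def in_keys_iff)

lemma lcoeff_B_y: "lcoeff (B_y lam z p) j = lcoeff p (j + 1)"
  using lcoeff_sum_lsmult_lt[where c="lcoeff p" and p=p and d="-1" and j=j]
  by (auto simp: B_y_def in_keys_iff)

lemma lcoeff_B_h: "lcoeff (B_h lam p) j = lam j * lcoeff p j"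
  using lcoeff_sum_lsmult_lt[where c="\<lambda>i. lcoeff p i * lam i" and p=p and d=0 and j=j]
  by (auto simp: B_h_def in_keys_iff)

section \<open>Periods of weight sequences\<close>

lemma int_subgroup_eq_multiples:
  fixes G :: "int set"
  assumes "0 \<in> G" and diff_closed: "\<And>a b. a \<in> G \<Longrightarrow> b \<in> G \<Longrightarrow> a - b \<in> G"
  shows "\<exists>n. G = {k * int n | k. True}"
proof -
  have uminus: "- a \<in> G" if "a \<in> G" for a
    using diff_closed[OF \<open>0 \<in> G\<close> that] by simp
  have add: "a + b \<in> G" if "a \<in> G" "b \<in> G" for a b
    using diff_closed[OF that(1) uminus[OF that(2)]] by simp
  have multiples: "k * a \<in> G" if "a \<in> G" for a k
  proof (induction k rule: int_induct[where k=0])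
    case base then show ?case using \<open>0 \<in> G\<close> by simp
  next
    case (step1 k) then show ?case using add[OF _ that] by (simp add: distrib_right)
  next
    case (step2 k) then show ?case using diff_closed[OF _ that] by (simp add: left_diff_distrib)
  qed
  show ?thesis
  proof (cases "G = {0}")
    case True then show ?thesis by (intro exI[of _ 0]) auto
  next
    case False
    then obtain a where "a \<in> G" "a \<noteq> 0" using \<open>0 \<in> G\<close> by blast
    then have "int (nat \<bar>a\<bar>) \<in> G" using uminus by (cases "a \<ge> 0") auto
    then have ex: "\<exists>n. 0 < n \<and> int n \<in> G" using \<open>a \<noteq> 0\<close> by (intro exI[of _ "nat \<bar>a\<bar>"]) auto
    define n where "n = (LEAST n. 0 < n \<and> int n \<in> G)"
    have n: "0 < n" "int n \<in> G" using LeastI_ex[OF ex] by (simp_all add: n_def)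
    have "d \<in> {k * int n | k. True}" if "d \<in> G" for d
    proof -
      have "d mod int n = d - (d div int n) * int n" by (simp add: minus_div_mult_eq_mod)
      then have r: "d mod int n \<in> G" using diff_closed[OF that multiples[OF n(2)]] by simp
      have "d mod int n = 0"
      proof (rule ccontr)
        assume "d mod int n \<noteq> 0"
        then have "0 < nat (d mod int n) \<and> int (nat (d mod int n)) \<in> G"
          using r n(1) by (simp add: order_le_neq_trans)
        then have "n \<le> nat (d mod int n)"
          unfolding n_def by (rule Least_le)
        moreover have "0 \<le> d mod int n" "d mod int n < int n" using n(1) by simp_all
        ultimately show False by (simp add: le_nat_iff)
      qed
      then show ?thesis by (metis (mono_tags) CollectI div_mult_mod_eq add_0_right)
    qed
    then have "G = {k * int n | k. True}" using multiples[OF n(2)] by blast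
    then show ?thesis ..
  qed
qed

definition periods :: "(int \<Rightarrow> complex) \<Rightarrow> int set" where
  "periods lam = {m. \<forall>i. lam (i + m) = lam i}"

lemma periods_eq_multiples_period: "periods lam = {k * int (period lam) | k. True}"
proof -
  have diff_closed: "a - b \<in> periods lam" if "a \<in> periods lam" "b \<in> periods lam" for a b
  proof -
    have "lam (i + (a - b)) = lam i" for i
    proof -
      have "lam (i + (a - b)) = lam (i - b + a)" by (simp add: algebra_simps)
      also have "\<dots> = lam (i - b)" using that(1) by (simp add: periods_def)
      also have "\<dots> = lam (i - b + b)"
        using that(2) unfolding periods_def by (metis (mono_tags) mem_Collect_eq)
      finally show ?thesis by simp
    qed
    then show ?thesis by (simp add: periods_def)
  qed
  have unique: "n1 = n2"
    if "{k * int n1 | k. True} = {k * int n2 | k. True}" for n1 n2 :: nat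
  proof -
    have "int n1 \<in> {k * int n2 | k. True}" "int n2 \<in> {k * int n1 | k. True}"
      using that by (metis (mono_tags) CollectI mult_1)+
    then obtain k1 k2 where "int n1 = k1 * int n2" "int n2 = k2 * int n1" by blast
    then have "int n2 dvd int n1" "int n1 dvd int n2" by (metis dvd_triv_right)+
    then show ?thesis by (simp add: dvd_antisym)
  qed
  have "\<exists>!n. periods lam = {k * int n | k. True}"
  proof -
    have "0 \<in> periods lam" by (simp add: periods_def)
    from int_subgroup_eq_multiples[OF this diff_closed] show ?thesis
      using unique by blast
  qed
  then show ?thesis
    unfolding period_def periods_def[symmetric] by (rule theI')
qed

lemma period_dvd_iff: "int (period lam) dvd d \<longleftrightarrow> (\<forall>i. lam (i + d) = lam i)"
  using periods_eq_multiples_period[of lam] unfolding periods_def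
  by (auto simp: dvd_def mult.commute)

lemma S_shift_eq:
  assumes "lam \<in> S f" "lam i = lam j"
  shows "lam (i + int s) = lam (j + int s)"
proof (induction s)
  case (Suc s)
  then have "poly f (lam (i + int s)) = poly f (lam (j + int s))" by simp
  with assms(1) show ?case by (simp add: S_def ac_simps)
qed (use assms in simp)

lemma S_period_dvd_of_eq_before:
  assumes "lam \<in> S f" "\<And>k. lam (i - int k) = lam (j - int k)"
  shows "int (period lam) dvd (j - i)"
  unfolding period_dvd_iff
proof
  fix l
  define k where "k = nat \<bar>l - i\<bar>"
  define s where "s = nat (l - i + int k)"
  have "lam (i - int k + int s) = lam (j - int k + int s)"
    using S_shift_eq[OF assms(1) assms(2)] .
  moreover have "i - int k + int s = l" "j - int k + int s = l + (j - i)"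
    unfolding s_def k_def by auto
  ultimately show "lam (l + (j - i)) = lam l" by simp
qed

text \<open>When the period is positive, agreement at one index propagates backwards by periodicity.\<close>

lemma S_period_dvd_of_eq:
  assumes "lam \<in> S f" "period lam \<noteq> 0" "lam i = lam j"
  shows "int (period lam) dvd (j - i)"
proof (rule S_period_dvd_of_eq_before[OF assms(1)])
  fix k
  define s where "s = k * period lam - k"
  have shift: "lam (l - int k) = lam (l + int s)" for l
  proof -
    have "int (period lam) dvd int k * int (period lam)" by simp
    then have "lam (l - int k) = lam (l - int k + int k * int (period lam))"
      unfolding period_dvd_iff by simp
    moreover have "l - int k + int k * int (period lam) = l + int s"
      using assms(2) by (simp add: s_def of_nat_diff algebra_simps)
    ultimately show ?thesis by simp
  qed
  show "lam (i - int k) = lam (j - int k)"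
    using S_shift_eq[OF assms(1,3)] shift by simp
qed

lemma prod_lessThan_periodic:
  fixes c :: "int \<Rightarrow> 'a :: comm_monoid_mult"
  assumes "\<And>j. c (j + int m) = c j"
  shows "(\<Prod>l<m. c (j + int l)) = (\<Prod>l<m. c (int l))"
proof -
  have shift: "(\<Prod>l<m. c (j + 1 + int l)) = (\<Prod>l<m. c (j + int l))" for j
  proof (cases m)
    case (Suc m')
    have "(\<Prod>l<m. c (j + 1 + int l)) = (\<Prod>l<m'. c (j + 1 + int l)) * c (j + int m)"
      by (simp add: Suc prod.lessThan_Suc algebra_simps)
    also have "\<dots> = c j * (\<Prod>l<m'. c (j + 1 + int l))" by (simp add: assms mult.commute)
    also have "\<dots> = (\<Prod>l<m. c (j + int l))"
      unfolding Suc prod.lessThan_Suc_shift by (simp add: algebra_simps)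
    finally show ?thesis .
  qed simp
  show ?thesis
  proof (induction j rule: int_induct[where k=0])
    case (step2 i) then show ?case using shift[of "i - 1"] by simp
  qed (use shift in simp_all)
qed

section \<open>Submodules and ideals\<close>

lemma funpow_closed: "(\<And>x. x \<in> A \<Longrightarrow> f x \<in> A) \<Longrightarrow> x \<in> A \<Longrightarrow> (f ^^ n) x \<in> A"
  by (induction n) auto

lemma Hf_submodule_lsmult: "Hf_submodule X Y H W \<Longrightarrow> p \<in> W \<Longrightarrow> lsmult c p \<in> W"
  by (simp add: Hf_submodule_def)

lemma Hf_submodule_diff:
  assumes "Hf_submodule X Y H W" "p \<in> W" "q \<in> W"
  shows "p - q \<in> W"
proof -
  have "p - q = p + lsmult (-1) q" by (rule poly_mapping_eqI) (simp add: lookup_add lookup_minus)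
  then show ?thesis using assms unfolding Hf_submodule_def by metis
qed

lemma Hf_submodule_sum:
  assumes "Hf_submodule X Y H W" "finite I" "\<And>i. i \<in> I \<Longrightarrow> g i \<in> W"
  shows "sum g I \<in> W"
  using assms(2,3) by induction (use assms(1) in \<open>simp_all add: Hf_submodule_def\<close>)

lemma Hf_submodule_multiples:
  assumes "\<And>p. X (p * u) = X p * u" "\<And>p. Y (p * u) = Y p * u" "\<And>p. H (p * u) = H p * u"
  shows "Hf_submodule X Y H {p * u | p. True}"
proof -
  have "p * u + q * u = (p + q) * u" "lsmult c (p * u) = lsmult c p * u" for p q c
    by (simp_all add: distrib_right lsmult_eq_single_mult mult.assoc)
  then show ?thesis
    unfolding Hf_submodule_def using assms by (auto intro: exI[of _ 0])
qed

definition laurent_ideal :: "laurent set \<Rightarrow> bool" where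
  "laurent_ideal W \<longleftrightarrow> 0 \<in> W \<and> (\<forall>p\<in>W. \<forall>q\<in>W. p + q \<in> W) \<and> (\<forall>r. \<forall>p\<in>W. r * p \<in> W)"

lemma laurent_ideal_mult: "laurent_ideal W \<Longrightarrow> p \<in> W \<Longrightarrow> r * p \<in> W"
  by (simp add: laurent_ideal_def)

lemma laurent_ideal_diff: "laurent_ideal W \<Longrightarrow> p \<in> W \<Longrightarrow> q \<in> W \<Longrightarrow> p - q \<in> W"
  unfolding laurent_ideal_def by (metis diff_conv_add_uminus mult_minus1)

lemma laurent_ideal_if_lt_shift_closed:
  assumes W: "Hf_submodule X Y H W"
    and right: "\<And>w. w \<in> W \<Longrightarrow> lt 1 * w \<in> W" and left: "\<And>w. w \<in> W \<Longrightarrow> lt (- 1) * w \<in> W"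
  shows "laurent_ideal W"
proof -
  have lt_closed: "lt i * w \<in> W" if "w \<in> W" for i w
  proof (induction i rule: int_induct[where k=0])
    case base then show ?case using that by (simp add: lt_0)
  next
    case (step1 i)
    have eq: "lt (i + 1) * w = lt 1 * (lt i * w)"
      by (simp add: lt_mult_lt mult.assoc[symmetric] add.commute)
    show ?case unfolding eq by (rule right[OF step1(2)])
  next
    case (step2 i)
    have eq: "lt (i - 1) * w = lt (- 1) * (lt i * w)"
      by (simp add: lt_mult_lt mult.assoc[symmetric])
    show ?case unfolding eq by (rule left[OF step2(2)])
  qed
  have "r * w \<in> W" if "w \<in> W" for r w
  proof -
    have "r * w = (\<Sum>i\<in>Poly_Mapping.keys r. lsmult (lcoeff r i) (lt i * w))"
      by (subst laurent_expansion[of r])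
        (simp add: sum_distrib_right lsmult_eq_single_mult mult.assoc)
    also have "\<dots> \<in> W"
      using lt_closed[OF that] W by (intro Hf_submodule_sum Hf_submodule_lsmult) auto
    finally show ?thesis .
  qed
  with W show ?thesis unfolding laurent_ideal_def Hf_submodule_def by blast
qed

lemma keys_subset_interval: "\<exists>lo hi. Poly_Mapping.keys (w :: laurent) \<subseteq> {lo..hi}"
proof (intro exI)
  let ?K = "insert 0 (Poly_Mapping.keys w)"
  show "Poly_Mapping.keys w \<subseteq> {Min ?K..Max ?K}" by auto
qed

definition shortest_in :: "laurent set \<Rightarrow> laurent \<Rightarrow> nat \<Rightarrow> bool" where
  "shortest_in W g n \<longleftrightarrow> g \<in> W \<and> g \<noteq> 0 \<and> Poly_Mapping.keys g \<subseteq> {0..int n} \<and>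
     (\<forall>w\<in>W. \<forall>lo hi. w \<noteq> 0 \<longrightarrow> Poly_Mapping.keys w \<subseteq> {lo..hi} \<longrightarrow> int n \<le> hi - lo)"

lemma shortest_in_keys: "shortest_in W g n \<Longrightarrow> Poly_Mapping.keys g \<subseteq> {0..int n}"
  by (simp add: shortest_in_def)

lemma shortest_in_minimal:
  "shortest_in W g n \<Longrightarrow> w \<in> W \<Longrightarrow> w \<noteq> 0 \<Longrightarrow> Poly_Mapping.keys w \<subseteq> {lo..hi}
    \<Longrightarrow> int n \<le> hi - lo"
  by (simp add: shortest_in_def)

lemma laurent_ideal_shift_to_origin:
  assumes "laurent_ideal W" "w \<in> W" "w \<noteq> 0" "Poly_Mapping.keys w \<subseteq> {lo..hi}"
  shows "\<exists>v\<in>W. v \<noteq> 0 \<and> Poly_Mapping.keys v \<subseteq> {0..int (nat (hi - lo))}"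
proof (intro bexI conjI)
  show "lt (- lo) * w \<in> W" using assms(1,2) by (rule laurent_ideal_mult)
  show "lt (- lo) * w \<noteq> 0" using assms(3) by (simp add: keys_lt_mult flip: keys_eq_empty)
  have "lo \<le> hi" using assms(3,4) by (fastforce simp flip: keys_eq_empty)
  then show "Poly_Mapping.keys (lt (- lo) * w) \<subseteq> {0..int (nat (hi - lo))}"
    using assms(4) by (auto simp: keys_lt_mult)
qed

lemma laurent_ideal_shortest_exists:
  assumes "laurent_ideal W" "W \<noteq> {0}"
  shows "\<exists>g n. shortest_in W g n"
proof -
  define P where "P n \<longleftrightarrow> (\<exists>w\<in>W. w \<noteq> 0 \<and> Poly_Mapping.keys w \<subseteq> {0..int n})" for n
  have P_width: "P (nat (hi - lo))"
    if "w \<in> W" "w \<noteq> 0" "Poly_Mapping.keys w \<subseteq> {lo..hi}" for w lo hi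
    unfolding P_def using laurent_ideal_shift_to_origin[OF assms(1) that] .
  obtain w where "w \<in> W" "w \<noteq> 0" using assms unfolding laurent_ideal_def by blast
  moreover obtain lo hi where "Poly_Mapping.keys w \<subseteq> {lo..hi}" using keys_subset_interval by blast
  ultimately have "\<exists>n. P n" using P_width by blast
  define n where "n = (LEAST n. P n)"
  obtain g where "g \<in> W" "g \<noteq> 0" "Poly_Mapping.keys g \<subseteq> {0..int n}"
    using LeastI_ex[OF \<open>\<exists>n. P n\<close>] unfolding n_def P_def by blast
  moreover have "int n \<le> hi - lo"
    if "w \<in> W" "w \<noteq> 0" "Poly_Mapping.keys w \<subseteq> {lo..hi}" for w lo hi
  proof -
    have "lo \<le> hi" using that(2,3) by (fastforce simp flip: keys_eq_empty)
    moreover have "n \<le> nat (hi - lo)" unfolding n_def using P_width[OF that] by (rule Least_le)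
    ultimately show ?thesis by linarith
  qed
  ultimately show ?thesis unfolding shortest_in_def by blast
qed

lemma shortest_in_lcoeff_0:
  assumes "shortest_in W g n"
  shows "lcoeff g 0 \<noteq> 0"
proof
  assume zero: "lcoeff g 0 = 0"
  have "Poly_Mapping.keys g \<subseteq> {1..int n}"
  proof
    fix j assume j: "j \<in> Poly_Mapping.keys g"
    then have "j \<noteq> 0" using zero by (auto simp: in_keys_iff)
    moreover have "j \<in> {0..int n}" using j shortest_in_keys[OF assms] by blast
    ultimately show "j \<in> {1..int n}" by simp
  qed
  from shortest_in_minimal[OF assms _ _ this] assms show False by (simp add: shortest_in_def)
qed

lemma shortest_in_lcoeff_top:
  assumes "shortest_in W g n"
  shows "lcoeff g (int n) \<noteq> 0"
proof
  assume zero: "lcoeff g (int n) = 0"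
  have "Poly_Mapping.keys g \<subseteq> {0..int n - 1}"
  proof
    fix j assume j: "j \<in> Poly_Mapping.keys g"
    then have "j \<noteq> int n" using zero by (auto simp: in_keys_iff)
    moreover have "j \<in> {0..int n}" using j shortest_in_keys[OF assms] by blast
    ultimately show "j \<in> {0..int n - 1}" by simp
  qed
  from shortest_in_minimal[OF assms _ _ this] assms show False by (simp add: shortest_in_def)
qed

text \<open>Division by a shortest element: cancel the top coefficient of w by a shifted multiple of g.\<close>

lemma shortest_in_reduce:
  assumes W: "laurent_ideal W" and g: "shortest_in W g n"
    and w: "w \<in> W" "Poly_Mapping.keys w \<subseteq> {lo..lo + int k}"
  shows "\<exists>w' q. w' \<in> W \<and> Poly_Mapping.keys w' \<subseteq> {lo..lo + int k - 1} \<and> w = w' + q * g"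
proof (cases "w = 0")
  case True then show ?thesis using W by (intro exI[of _ 0]) (simp add: laurent_ideal_def)
next
  case False
  have "n \<le> k" using shortest_in_minimal[OF g w(1) False w(2)] by simp
  define top where "top = lo + int k"
  define c where "c = lcoeff w top / lcoeff g (int n)"
  define q where "q = lsmult c (lt (top - int n))"
  have "q * g = lsmult c (lt (top - int n) * g)"
    by (simp add: q_def lsmult_eq_single_mult mult.assoc)
  then have lcoeff_diff:
    "lcoeff (w - q * g) j = lcoeff w j - c * lcoeff g (j - (top - int n))" for j
    by (simp add: lookup_minus lcoeff_lt_mult)
  have "w - q * g \<in> W"
    using W w(1) g by (intro laurent_ideal_diff laurent_ideal_mult) (auto simp: shortest_in_def)
  moreover have "Poly_Mapping.keys (w - q * g) \<subseteq> {lo..lo + int k - 1}"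
  proof
    fix j assume j: "j \<in> Poly_Mapping.keys (w - q * g)"
    have "j \<noteq> top"
      using j shortest_in_lcoeff_top[OF g] by (auto simp: in_keys_iff lcoeff_diff c_def)
    moreover have "lo \<le> j \<and> j \<le> top"
    proof (cases "lcoeff w j = 0")
      case True
      then have "j - (top - int n) \<in> Poly_Mapping.keys g"
        using j by (auto simp: in_keys_iff lcoeff_diff)
      then have "j - (top - int n) \<in> {0..int n}" using shortest_in_keys[OF g] by blast
      then show ?thesis using \<open>n \<le> k\<close> unfolding top_def by simp
    next
      case False
      then show ?thesis using w(2) unfolding top_def by (auto simp flip: in_keys_iff)
    qed
    ultimately show "j \<in> {lo..lo + int k - 1}" unfolding top_def by auto
  qed
  ultimately show ?thesis by (intro exI[of _ "w - q * g"] exI[of _ q]) simp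
qed

lemma laurent_ideal_eq_multiples_shortest:
  assumes W: "laurent_ideal W" and g: "shortest_in W g n"
  shows "W = {p * g | p. True}"
proof
  show "{p * g | p. True} \<subseteq> W" using W g by (auto simp: shortest_in_def laurent_ideal_mult)
  have "\<forall>w lo. w \<in> W \<longrightarrow> Poly_Mapping.keys w \<subseteq> {lo..lo + int k} \<longrightarrow> (\<exists>p. w = p * g)" for k
  proof (induction k)
    case 0
    show ?case
    proof (intro allI impI)
      fix w lo assume "w \<in> W" "Poly_Mapping.keys w \<subseteq> {lo..lo + int 0}"
      from shortest_in_reduce[OF W g this] obtain w' q
        where "Poly_Mapping.keys w' \<subseteq> {lo..lo - 1}" "w = w' + q * g" by auto
      moreover from this(1) have "w' = 0" by (simp flip: keys_eq_empty)
      ultimately show "\<exists>p. w = p * g" by auto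
    qed
  next
    case (Suc k)
    show ?case
    proof (intro allI impI)
      fix w lo assume "w \<in> W" "Poly_Mapping.keys w \<subseteq> {lo..lo + int (Suc k)}"
      from shortest_in_reduce[OF W g this] obtain w' q
        where "w' \<in> W" "Poly_Mapping.keys w' \<subseteq> {lo..lo + int k}" "w = w' + q * g" by auto
      with Suc.IH obtain p where "w = p * g + q * g" by blast
      then show "\<exists>p. w = p * g" by (metis distrib_right)
    qed
  qed
  moreover have "\<exists>lo k. Poly_Mapping.keys w \<subseteq> {lo..lo + int k}" for w :: laurent
  proof -
    obtain lo hi where "Poly_Mapping.keys w \<subseteq> {lo..hi}" using keys_subset_interval[of w] by blast
    then show ?thesis by (intro exI[of _ lo] exI[of _ "nat (hi - lo)"]) auto
  qed
  ultimately show "W \<subseteq> {p * g | p. True}" by blast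
qed

section \<open>Evaluation and polynomials in t^m\<close>

definition laurent_eval :: "complex \<Rightarrow> laurent \<Rightarrow> complex" where
  "laurent_eval t p = (\<Sum>i\<in>Poly_Mapping.keys p. lcoeff p i * t powi i)"

lemma laurent_eval_superset:
  "finite K \<Longrightarrow> Poly_Mapping.keys p \<subseteq> K \<Longrightarrow> laurent_eval t p = (\<Sum>i\<in>K. lcoeff p i * t powi i)"
  unfolding laurent_eval_def by (rule sum.mono_neutral_left) (auto simp: in_keys_iff)

lemma laurent_eval_diff: "laurent_eval t (p - q) = laurent_eval t p - laurent_eval t q"
proof -
  let ?K = "Poly_Mapping.keys p \<union> Poly_Mapping.keys q"
  have "Poly_Mapping.keys (p - q) \<subseteq> ?K" by (auto simp: in_keys_iff lookup_minus)
  then have "laurent_eval t (p - q) = (\<Sum>i\<in>?K. lcoeff (p - q) i * t powi i)"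
    by (intro laurent_eval_superset) auto
  also have "\<dots> = (\<Sum>i\<in>?K. lcoeff p i * t powi i) - (\<Sum>i\<in>?K. lcoeff q i * t powi i)"
    by (simp add: lookup_minus left_diff_distrib sum_subtractf)
  also have "\<dots> = laurent_eval t p - laurent_eval t q"
    using laurent_eval_superset[of ?K p t] laurent_eval_superset[of ?K q t] by simp
  finally show ?thesis .
qed

lemma laurent_eval_lsmult: "laurent_eval t (lsmult c p) = c * laurent_eval t p"
proof -
  have "Poly_Mapping.keys (lsmult c p) \<subseteq> Poly_Mapping.keys p" by (auto simp: in_keys_iff)
  then have "laurent_eval t (lsmult c p)
      = (\<Sum>i\<in>Poly_Mapping.keys p. lcoeff (lsmult c p) i * t powi i)"
    by (intro laurent_eval_superset) auto
  then show ?thesis by (simp add: laurent_eval_def sum_distrib_left mult.assoc)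
qed

lemma laurent_eval_lt_mult:
  assumes "t \<noteq> 0"
  shows "laurent_eval t (lt d * p) = t powi d * laurent_eval t p"
proof -
  have "laurent_eval t (lt d * p)
      = (\<Sum>i\<in>Poly_Mapping.keys p. lcoeff (lt d * p) (i + d) * t powi (i + d))"
    by (simp add: laurent_eval_def keys_lt_mult sum.reindex inj_on_def)
  also have "\<dots> = t powi d * laurent_eval t p"
    using assms
    by (simp add: laurent_eval_def lcoeff_lt_mult lcoeff_mult_lt power_int_add sum_distrib_left
        ac_simps)
  finally show ?thesis .
qed

lemma laurent_eval_1: "laurent_eval t 1 = 1"
  by (simp add: laurent_eval_def)

lemma complex_nth_root_exists:
  assumes "n > 0"
  shows "\<exists>t::complex. t ^ n = c"
proof (cases "c = 0")
  case False
  from bij_betw_nth_root_unity[OF False assms] show ?thesis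
    unfolding bij_betw_def by (metis (mono_tags, lifting) imageI mem_Collect_eq power_one)
qed (use assms in auto)

text \<open>Evaluating at an m-th root of c shows that t^m - c is not a unit.\<close>

lemma one_notin_multiples_lt_minus:
  assumes "c \<noteq> 0" "m > 0"
  shows "(1::laurent) \<notin> {p * (lt m - lsmult c (lt 0)) | p. True}"
proof
  obtain t where t: "t ^ nat m = c" using complex_nth_root_exists[of "nat m" c] assms by auto
  then have "t \<noteq> 0" "t powi m = c" using assms by (auto simp: power_int_def)
  assume "1 \<in> {p * (lt m - lsmult c (lt 0)) | p. True}"
  then obtain p where "1 = lt m * p - lsmult c p" by (auto simp: mult_lt_minus_lsmult)
  then have "laurent_eval t 1 = laurent_eval t (lt m * p - lsmult c p)" by simp
  then show False
    by (simp add: laurent_eval_1 laurent_eval_diff laurent_eval_lsmult laurent_eval_lt_mult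
        \<open>t \<noteq> 0\<close> \<open>t powi m = c\<close>)
qed

definition laurent_of_poly :: "nat \<Rightarrow> complex poly \<Rightarrow> laurent" where
  "laurent_of_poly m P = (\<Sum>k\<le>degree P. lsmult (coeff P k) (lt (int k * int m)))"

lemma laurent_of_poly_atMost:
  assumes "degree P \<le> N"
  shows "laurent_of_poly m P = (\<Sum>k\<le>N. lsmult (coeff P k) (lt (int k * int m)))"
  unfolding laurent_of_poly_def using assms
  by (intro sum.mono_neutral_left) (auto simp: coeff_eq_0)

lemma laurent_of_poly_add: "laurent_of_poly m (P + Q) = laurent_of_poly m P + laurent_of_poly m Q"
proof -
  define N where "N = max (degree P) (degree Q)"
  have "degree (P + Q) \<le> N" "degree P \<le> N" "degree Q \<le> N"
    by (simp_all add: N_def degree_add_le)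
  then show ?thesis
    by (simp add: laurent_of_poly_atMost lsmult_add_left sum.distrib)
qed

lemma laurent_of_poly_smult: "laurent_of_poly m (smult c P) = lsmult c (laurent_of_poly m P)"
  by (simp add: laurent_of_poly_atMost[of "smult c P" "degree P"] laurent_of_poly_def lsmult_sum)

lemma laurent_of_poly_pCons_0: "laurent_of_poly m (pCons 0 P) = lt (int m) * laurent_of_poly m P"
proof -
  have "laurent_of_poly m (pCons 0 P)
      = (\<Sum>k\<le>Suc (degree P). lsmult (coeff (pCons 0 P) k) (lt (int k * int m)))"
    by (rule laurent_of_poly_atMost) (simp add: degree_pCons_le)
  also have "\<dots> = (\<Sum>k\<le>degree P. lsmult (coeff P k) (lt (int m) * lt (int k * int m)))"
    by (subst sum.atMost_Suc_shift) (simp add: lt_mult_lt algebra_simps)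
  also have "\<dots> = lt (int m) * laurent_of_poly m P"
    by (simp add: laurent_of_poly_def sum_distrib_left lsmult_eq_single_mult ac_simps)
  finally show ?thesis .
qed

lemma laurent_of_poly_linear_factor:
  "laurent_of_poly m ([:- r, 1:] * Q) = laurent_of_poly m Q * (lt (int m) - lsmult r (lt 0))"
proof -
  have "laurent_of_poly m ([:- r, 1:] * Q) = laurent_of_poly m (pCons 0 Q + smult (- r) Q)"
    by simp
  also have "\<dots> = lt (int m) * laurent_of_poly m Q + lsmult (- r) (laurent_of_poly m Q)"
    by (simp only: laurent_of_poly_add laurent_of_poly_smult laurent_of_poly_pCons_0)
  also have "\<dots> = laurent_of_poly m Q * (lt (int m) - lsmult r (lt 0))"
    by (rule poly_mapping_eqI) (simp add: mult_lt_minus_lsmult lookup_add lookup_minus)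
  finally show ?thesis .
qed

lemma in_C_tm_laurent_of_poly:
  assumes "m > 0" "in_C_tm m g"
  shows "\<exists>G. g = laurent_of_poly m G \<and> coeff G 0 = lcoeff g 0"
proof -
  obtain lo hi where "Poly_Mapping.keys g \<subseteq> {lo..hi}" using keys_subset_interval[of g] by blast
  define N where "N = nat hi"
  have N: "Poly_Mapping.keys g \<subseteq> {lo..int N}"
    using \<open>Poly_Mapping.keys g \<subseteq> {lo..hi}\<close> by (auto simp: N_def)
  define G where "G = (\<Sum>k\<le>N. monom (lcoeff g (int k * int m)) k)"
  have coeff_G: "coeff G k = (if k \<le> N then lcoeff g (int k * int m) else 0)" for k
    by (simp add: G_def coeff_sum coeff_monom)
  have "lcoeff (laurent_of_poly m G) j = lcoeff g j" for j
  proof -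
    have "degree G \<le> N"
      unfolding G_def by (intro degree_sum_le) (auto intro: order.trans[OF degree_monom_le])
    then have "lcoeff (laurent_of_poly m G) j
        = (\<Sum>k\<le>N. if int k * int m = j then lcoeff g j else 0)"
      by (auto simp: laurent_of_poly_atMost lookup_sum lcoeff_lt coeff_G intro!: sum.cong)
    also have "\<dots> = lcoeff g j"
    proof (cases "j \<in> Poly_Mapping.keys g")
      case True
      then have "0 \<le> j" "int m dvd j" using assms(2) by (auto simp: in_C_tm_def)
      then obtain q where q: "j = int m * q" "q \<ge> 0"
        using assms(1) by (auto simp: dvd_def zero_le_mult_iff)
      moreover have "q \<le> int N"
      proof -
        have "q * 1 \<le> q * int m" using q(2) assms(1) by (intro mult_left_mono) auto
        moreover have "j \<le> int N" using True N by auto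
        ultimately show ?thesis using q(1) by (simp add: mult.commute)
      qed
      ultimately have "(\<Sum>k\<le>N. if int k * int m = j then lcoeff g j else 0)
          = (\<Sum>k\<le>N. if k = nat q then lcoeff g j else 0)"
        using assms(1) by (intro sum.cong) auto
      also have "\<dots> = lcoeff g j" using \<open>q \<le> int N\<close> by simp
      finally show ?thesis .
    qed (simp add: in_keys_iff sum.neutral)
    finally show ?thesis .
  qed
  then have "g = laurent_of_poly m G" by (simp add: poly_mapping_eqI)
  then show ?thesis by (intro exI[of _ G]) (simp add: coeff_G)
qed

section \<open>Weight modules on Laurent polynomials\<close>

text \<open>A(lam, z) is the instance a = 1, b = lam + z, and B(lam, z) the instance a = lam + z, b = 1.\<close>

locale laurent_weight_module =
  fixes f :: "complex poly" and X Y H :: "laurent \<Rightarrow> laurent"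
    and a b lam :: "int \<Rightarrow> complex" and z :: complex
  assumes lam_in_S: "lam \<in> S f"
    and lcoeff_X: "\<And>p j. lcoeff (X p) j = a j * lcoeff p (j - 1)"
    and lcoeff_Y: "\<And>p j. lcoeff (Y p) j = b (j + 1) * lcoeff p (j + 1)"
    and lcoeff_H: "\<And>p j. lcoeff (H p) j = lam j * lcoeff p j"
    and a_mult_b: "\<And>j. a j * b j = lam j + z"
    and a_or_b_one: "(\<forall>j. a j = 1) \<or> (\<forall>j. b j = 1)"
    and a_b_periodic: "\<And>m j. (\<forall>i. lam (i + m) = lam i) \<Longrightarrow> a (j + m) = a j \<and> b (j + m) = b j"
begin

lemma lcoeff_op_poly_H: "lcoeff (op_poly g H p) j = poly g (lam j) * lcoeff p j"
proof -
  have "lcoeff ((H ^^ k) p) j = lam j ^ k * lcoeff p j" for k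
    by (induction k) (simp_all add: lcoeff_H)
  then show ?thesis
    unfolding op_poly_def by (simp add: lookup_sum poly_altdef sum_distrib_right mult.assoc)
qed

lemma Hf_module: "Hf_module f X Y H"
proof -
  have f_lam: "poly f (lam i) = lam (i + 1)" for i using lam_in_S by (simp add: S_def)
  have "clinear_op X" "clinear_op Y" "clinear_op H"
    unfolding clinear_op_def
    by (auto intro!: poly_mapping_eqI simp: lookup_add lcoeff_X lcoeff_Y lcoeff_H algebra_simps)
  moreover have "H (X p) = X (op_poly f H p)" "Y (H p) = op_poly f H (Y p)" for p
    by (rule poly_mapping_eqI, simp add: lcoeff_H lcoeff_X lcoeff_Y lcoeff_op_poly_H f_lam)+
  moreover have "Y (X p) - X (Y p) = op_poly f H p - H p" for p
  proof (rule poly_mapping_eqI)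
    fix j
    have "lcoeff (Y (X p) - X (Y p)) j = (a (j + 1) * b (j + 1) - a j * b j) * lcoeff p j"
      by (simp add: lookup_minus lcoeff_X lcoeff_Y algebra_simps)
    also have "\<dots> = lcoeff (op_poly f H p - H p) j"
      by (simp add: a_mult_b lookup_minus lcoeff_op_poly_H lcoeff_H f_lam algebra_simps)
    finally show "lcoeff (Y (X p) - X (Y p)) j = lcoeff (op_poly f H p - H p) j" .
  qed
  ultimately show ?thesis unfolding Hf_module_def by blast
qed

lemma a_b_nonzero_iff: "(\<forall>j. a j \<noteq> 0 \<and> b j \<noteq> 0) \<longleftrightarrow> (\<forall>j. lam j + z \<noteq> 0)"
  by (simp flip: a_mult_b)

lemma lcoeff_X_pow:
  "lcoeff ((X ^^ k) p) j = (\<Prod>l<k. a (j - int k + 1 + int l)) * lcoeff p (j - int k)"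
proof (induction k arbitrary: j)
  case (Suc k)
  have "(\<Prod>l<Suc k. a (j - int (Suc k) + 1 + int l)) = (\<Prod>l<k. a (j - int k + int l)) * a j"
    by (simp add: prod.lessThan_Suc algebra_simps)
  then show ?case by (simp add: lcoeff_X Suc algebra_simps)
qed simp

lemma lcoeff_Y_pow: "lcoeff ((Y ^^ k) p) j = (\<Prod>l<k. b (j + 1 + int l)) * lcoeff p (j + int k)"
proof (induction k arbitrary: j)
  case (Suc k)
  have "(\<Prod>l<Suc k. b (j + 1 + int l)) = b (j + 1) * (\<Prod>l<k. b (j + 2 + int l))"
    unfolding prod.lessThan_Suc_shift by (simp add: algebra_simps)
  then show ?case by (simp add: lcoeff_Y Suc algebra_simps)
qed simp

lemma X_lt: "X (lt i) = lsmult (a (i + 1)) (lt (i + 1))"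
  by (rule poly_mapping_eqI) (auto simp: lcoeff_X lcoeff_lt)

lemma Y_lt: "Y (lt i) = lsmult (b i) (lt (i - 1))"
  by (rule poly_mapping_eqI) (auto simp: lcoeff_Y lcoeff_lt)

lemma submodule_eq_UNIV_if_lt:
  assumes nonzero: "\<forall>j. lam j + z \<noteq> 0" and W: "Hf_submodule X Y H W" and "lt i \<in> W"
  shows "W = UNIV"
proof -
  have a: "a j \<noteq> 0" and b: "b j \<noteq> 0" for j using nonzero by (simp_all flip: a_b_nonzero_iff)
  have lt_in: "lt j \<in> W" for j
  proof (induction j rule: int_induct[where k=i])
    case base then show ?case by (rule \<open>lt i \<in> W\<close>)
  next
    case (step1 j)
    have "lt (j + 1) = lsmult (1 / a (j + 1)) (X (lt j))" using a by (simp add: X_lt)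
    then show ?case using step1 W by (simp add: Hf_submodule_def)
  next
    case (step2 j)
    have "lt (j - 1) = lsmult (1 / b j) (Y (lt j))" using b by (simp add: Y_lt)
    then show ?case using step2 W by (simp add: Hf_submodule_def)
  qed
  have "p \<in> W" for p
    using W lt_in by (subst laurent_expansion) (intro Hf_submodule_sum Hf_submodule_lsmult; simp)
  then show ?thesis by blast
qed

text \<open>Since lam is not periodic, the weights lam (i - k) and lam (j - k) differ for some k;
  the operator X^k (H - lam (j - k)) Y^k then kills the j-th coefficient of w but not the i-th.\<close>

lemma submodule_shrink_support:
  assumes nonzero: "\<forall>j. lam j + z \<noteq> 0" and aperiodic: "period lam = 0"
    and W: "Hf_submodule X Y H W" and "w \<in> W"
    and ij: "i \<in> Poly_Mapping.keys w" "j \<in> Poly_Mapping.keys w" "i \<noteq> j"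
  shows "\<exists>v\<in>W. Poly_Mapping.keys v \<subseteq> Poly_Mapping.keys w - {j} \<and> i \<in> Poly_Mapping.keys v"
proof -
  obtain k where k: "lam (i - int k) \<noteq> lam (j - int k)"
    using S_period_dvd_of_eq_before[OF lam_in_S, of i j] aperiodic ij(3) by auto
  define c where "c l = (\<Prod>n<k. lam (l - int k + 1 + int n) + z)" for l
  define v where "v = (X ^^ k) (H ((Y ^^ k) w)) - lsmult (lam (j - int k)) ((X ^^ k) ((Y ^^ k) w))"
  have lcoeff_v: "lcoeff v l = c l * (lam (l - int k) - lam (j - int k)) * lcoeff w l" for l
    by (simp add: v_def c_def lookup_minus lcoeff_X_pow lcoeff_Y_pow lcoeff_H
        prod.distrib[symmetric] a_mult_b algebra_simps)
  have "(Y ^^ k) w \<in> W" using W \<open>w \<in> W\<close> by (intro funpow_closed) (auto simp: Hf_submodule_def)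
  then have "v \<in> W"
    unfolding v_def using W \<open>w \<in> W\<close>
    by (intro Hf_submodule_diff[OF W] Hf_submodule_lsmult[OF W] funpow_closed)
      (auto simp: Hf_submodule_def)
  moreover have "c i \<noteq> 0" using nonzero by (simp add: c_def)
  then have "i \<in> Poly_Mapping.keys v" using ij(1) k by (simp add: in_keys_iff lcoeff_v)
  moreover have "Poly_Mapping.keys v \<subseteq> Poly_Mapping.keys w - {j}"
    by (auto simp: in_keys_iff lcoeff_v)
  ultimately show ?thesis by blast
qed

lemma submodule_contains_lt:
  assumes nonzero: "\<forall>j. lam j + z \<noteq> 0" and aperiodic: "period lam = 0"
    and W: "Hf_submodule X Y H W"
  shows "w \<in> W \<Longrightarrow> w \<noteq> 0 \<Longrightarrow> \<exists>i. lt i \<in> W"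
proof (induction "card (Poly_Mapping.keys w)" arbitrary: w rule: less_induct)
  case less
  obtain i where i: "i \<in> Poly_Mapping.keys w" using less.prems(2) by (auto simp flip: keys_eq_empty)
  show ?case
  proof (cases "Poly_Mapping.keys w = {i}")
    case True
    define c where "c = lcoeff w i"
    have "w = lsmult c (lt i)" using True laurent_expansion[of w] by (simp add: c_def)
    moreover have "c \<noteq> 0" using i by (simp add: c_def in_keys_iff)
    ultimately have "lt i = lsmult (1 / c) w" by simp
    then show ?thesis using Hf_submodule_lsmult[OF W less.prems(1)] by metis
  next
    case False
    then obtain j where j: "j \<in> Poly_Mapping.keys w" "i \<noteq> j" using i by blast
    obtain v where v: "v \<in> W" "Poly_Mapping.keys v \<subseteq> Poly_Mapping.keys w - {j}"
        "i \<in> Poly_Mapping.keys v"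
      using submodule_shrink_support[OF nonzero aperiodic W less.prems(1) i j] by blast
    have "card (Poly_Mapping.keys v) < card (Poly_Mapping.keys w)"
      using v(2) j(1) by (intro psubset_card_mono) auto
    moreover have "v \<noteq> 0" using v(3) by auto
    ultimately show ?thesis using less.hyps v(1) by blast
  qed
qed

lemma proper_submodule_if_b_zero:
  assumes "b i0 = 0"
  shows "\<exists>W. Hf_submodule X Y H W \<and> W \<noteq> {0} \<and> W \<noteq> UNIV"
proof (intro exI conjI)
  let ?U = "{p. \<forall>k<i0. lcoeff p k = 0}"
  have "lcoeff (Y p) k = 0" if "p \<in> ?U" "k < i0" for p k
    using that assms by (cases "k + 1 = i0") (auto simp: lcoeff_Y)
  then show "Hf_submodule X Y H ?U"
    unfolding Hf_submodule_def by (auto simp: lookup_add lcoeff_X lcoeff_H)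
  show "?U \<noteq> {0}" using lt_nonzero[of i0] by (auto simp: lcoeff_lt)
  have "lt (i0 - 1) \<notin> ?U" by (auto simp: lcoeff_lt)
  then show "?U \<noteq> UNIV" by blast
qed

lemma proper_submodule_if_a_zero:
  assumes "a i0 = 0"
  shows "\<exists>W. Hf_submodule X Y H W \<and> W \<noteq> {0} \<and> W \<noteq> UNIV"
proof (intro exI conjI)
  let ?U = "{p. \<forall>k\<ge>i0. lcoeff p k = 0}"
  have "lcoeff (X p) k = 0" if "p \<in> ?U" "i0 \<le> k" for p k
    using that assms by (cases "k = i0") (auto simp: lcoeff_X)
  then show "Hf_submodule X Y H ?U"
    unfolding Hf_submodule_def by (auto simp: lookup_add lcoeff_Y lcoeff_H)
  show "?U \<noteq> {0}" using lt_nonzero[of "i0 - 1"] by (auto simp: lcoeff_lt)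
  have "lt i0 \<notin> ?U" by (auto simp: lcoeff_lt)
  then show "?U \<noteq> UNIV" by blast
qed

lemma submodule_multiples_lt_period_minus:
  "Hf_submodule X Y H {p * (lt (int (period lam)) - lsmult c (lt 0)) | p. True}"
proof (rule Hf_submodule_multiples)
  let ?m = "int (period lam)"
  have periodic: "lam (j - ?m) = lam j" "a (j - ?m) = a j" "b (j - ?m) = b j" for j
    using period_dvd_iff[of lam ?m] a_b_periodic[of ?m "j - ?m"]
    by (metis dvd_refl diff_add_cancel)+
  fix p
  show "X (p * (lt ?m - lsmult c (lt 0))) = X p * (lt ?m - lsmult c (lt 0))"
    unfolding mult_lt_minus_lsmult by (rule poly_mapping_eqI)
      (simp add: lookup_minus lcoeff_X lcoeff_lt_mult lcoeff_mult_lt periodic algebra_simps)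
  show "Y (p * (lt ?m - lsmult c (lt 0))) = Y p * (lt ?m - lsmult c (lt 0))"
    unfolding mult_lt_minus_lsmult by (rule poly_mapping_eqI)
      (simp add: lookup_minus lcoeff_Y lcoeff_lt_mult lcoeff_mult_lt periodic[of "_ + 1", simplified]
        algebra_simps)
  show "H (p * (lt ?m - lsmult c (lt 0))) = H p * (lt ?m - lsmult c (lt 0))"
    unfolding mult_lt_minus_lsmult by (rule poly_mapping_eqI)
      (simp add: lookup_minus lcoeff_H lcoeff_lt_mult lcoeff_mult_lt periodic algebra_simps)
qed

lemma proper_submodule_if_periodic:
  assumes "period lam \<noteq> 0"
  shows "\<exists>W. Hf_submodule X Y H W \<and> W \<noteq> {0} \<and> W \<noteq> UNIV"
proof (intro exI conjI)
  let ?u = "lt (int (period lam)) - lsmult 1 (lt 0)"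
  show "Hf_submodule X Y H {p * ?u | p. True}" by (rule submodule_multiples_lt_period_minus)
  have "1 \<notin> {p * ?u | p. True}"
    using one_notin_multiples_lt_minus[of 1 "int (period lam)"] assms by simp
  then show "{p * ?u | p. True} \<noteq> UNIV" by blast
  have "lcoeff ?u (int (period lam)) \<noteq> 0" using assms by (simp add: lookup_minus lcoeff_lt)
  then have "?u \<noteq> 0" by auto
  moreover have "?u \<in> {p * ?u | p. True}" by (metis (mono_tags) CollectI mult_1)
  ultimately show "{p * ?u | p. True} \<noteq> {0}" by blast
qed

lemma simple_iff: "simple_Hf_module f X Y H \<longleftrightarrow> (\<forall>j. lam j + z \<noteq> 0) \<and> period lam = 0"
proof
  assume "simple_Hf_module f X Y H"
  then have "\<not> (\<exists>W. Hf_submodule X Y H W \<and> W \<noteq> {0} \<and> W \<noteq> UNIV)"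
    unfolding simple_Hf_module_def by blast
  then show "(\<forall>j. lam j + z \<noteq> 0) \<and> period lam = 0"
    using proper_submodule_if_a_zero proper_submodule_if_b_zero proper_submodule_if_periodic
    by (metis a_b_nonzero_iff)
next
  assume "(\<forall>j. lam j + z \<noteq> 0) \<and> period lam = 0"
  then have "W = {0} \<or> W = UNIV" if "Hf_submodule X Y H W" for W
    using that submodule_contains_lt submodule_eq_UNIV_if_lt unfolding Hf_submodule_def by blast
  moreover have "(UNIV :: laurent set) \<noteq> {0}" using lt_nonzero[of 0] by blast
  ultimately show "simple_Hf_module f X Y H" unfolding simple_Hf_module_def using Hf_module by blast
qed

text \<open>X^m and Y^m for the period m are nonzero multiples of t^m and t^-m, because the
  coefficient products over a full period do not depend on the degree.\<close>

lemma submodule_laurent_ideal: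
  assumes nonzero: "\<forall>j. lam j + z \<noteq> 0" and periodic: "period lam \<noteq> 0"
    and W: "Hf_submodule X Y H W"
  shows "laurent_ideal W"
proof -
  let ?m = "period lam"
  have a: "a j \<noteq> 0" and b: "b j \<noteq> 0" for j using nonzero by (simp_all flip: a_b_nonzero_iff)
  have "\<forall>i. lam (i + int ?m) = lam i" using period_dvd_iff[of lam "int ?m"] by simp
  then have per: "a (j + int ?m) = a j" "b (j + int ?m) = b j" for j
    using a_b_periodic by simp_all
  have X_pow_in: "(X ^^ k) w \<in> W" and Y_pow_in: "(Y ^^ k) w \<in> W" if "w \<in> W" for w k
    using W that by (auto intro!: funpow_closed simp: Hf_submodule_def)
  define CX where "CX = (\<Prod>l<?m. a (int l))"
  define CY where "CY = (\<Prod>l<?m. b (int l))"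
  have "CX \<noteq> 0" "CY \<noteq> 0" using a b by (simp_all add: CX_def CY_def)
  have "(X ^^ ?m) w = lsmult CX (lt (int ?m) * w)" for w
    by (rule poly_mapping_eqI)
      (simp add: CX_def lcoeff_X_pow lcoeff_lt_mult prod_lessThan_periodic[where c=a, OF per(1)])
  then have up: "lt (int ?m) * w \<in> W" if "w \<in> W" for w
    using Hf_submodule_lsmult[OF W X_pow_in[OF that], of "1 / CX" ?m] \<open>CX \<noteq> 0\<close> by simp
  have "(Y ^^ ?m) w = lsmult CY (lt (- int ?m) * w)" for w
    by (rule poly_mapping_eqI)
      (simp add: CY_def lcoeff_Y_pow lcoeff_lt_mult prod_lessThan_periodic[where c=b, OF per(2)])
  then have down: "lt (- int ?m) * w \<in> W" if "w \<in> W" for w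
    using Hf_submodule_lsmult[OF W Y_pow_in[OF that], of "1 / CY" ?m] \<open>CY \<noteq> 0\<close> by simp
  show ?thesis
    using a_or_b_one
  proof
    assume "\<forall>j. a j = 1"
    then have "X w = lt 1 * w" for w
      by (intro poly_mapping_eqI) (simp add: lcoeff_X lcoeff_lt_mult)
    then have right: "lt 1 * w \<in> W" if "w \<in> W" for w using X_pow_in[OF that, of 1] by simp
    have "lt (- 1) * w = ((*) (lt 1) ^^ (?m - 1)) (lt (- int ?m) * w)" for w
      using periodic by (simp add: lt_mult_funpow lt_mult_lt mult.assoc[symmetric] of_nat_diff)
    then have "lt (- 1) * w \<in> W" if "w \<in> W" for w
      using funpow_closed[of W, OF right down[OF that]] by simp
    with right show ?thesis by (rule laurent_ideal_if_lt_shift_closed[OF W])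
  next
    assume "\<forall>j. b j = 1"
    then have "Y w = lt (- 1) * w" for w
      by (intro poly_mapping_eqI) (simp add: lcoeff_Y lcoeff_lt_mult)
    then have left: "lt (- 1) * w \<in> W" if "w \<in> W" for w using Y_pow_in[OF that, of 1] by simp
    have "lt 1 * w = ((*) (lt (- 1)) ^^ (?m - 1)) (lt (int ?m) * w)" for w
      using periodic by (simp add: lt_mult_funpow lt_mult_lt mult.assoc[symmetric] of_nat_diff)
    then have "lt 1 * w \<in> W" if "w \<in> W" for w
      using funpow_closed[of W, OF left up[OF that]] by simp
    then show ?thesis using left by (rule laurent_ideal_if_lt_shift_closed[OF W])
  qed
qed

lemma shortest_in_eigenvector:
  assumes W: "Hf_submodule X Y H W" and g: "shortest_in W g n"
  shows "H g = lsmult (lam 0) g"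
proof -
  define v where "v = H g - lsmult (lam 0) g"
  have lcoeff_v: "lcoeff v j = (lam j - lam 0) * lcoeff g j" for j
    by (simp add: v_def lookup_minus lcoeff_H algebra_simps)
  have "v \<in> W" unfolding v_def using W g
    by (intro Hf_submodule_diff Hf_submodule_lsmult) (auto simp: shortest_in_def Hf_submodule_def)
  moreover have "Poly_Mapping.keys v \<subseteq> {1..int n}"
  proof
    fix j assume "j \<in> Poly_Mapping.keys v"
    then have "j \<in> Poly_Mapping.keys g" "j \<noteq> 0" by (auto simp: in_keys_iff lcoeff_v)
    then show "j \<in> {1..int n}" using shortest_in_keys[OF g] by auto
  qed
  ultimately have "v = 0" using shortest_in_minimal[OF g] by fastforce
  then show ?thesis by (simp add: v_def)
qed

lemma submodule_principal_eigen:
  assumes "\<forall>j. lam j + z \<noteq> 0" "period lam \<noteq> 0" "Hf_submodule X Y H W" "W \<noteq> {0}"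
  obtains g n where "shortest_in W g n" "H g = lsmult (lam 0) g" "in_C_tm (period lam) g"
    "W = {p * g | p. True}"
proof -
  have ideal: "laurent_ideal W" using submodule_laurent_ideal assms(1-3) .
  then obtain g n where g: "shortest_in W g n" using laurent_ideal_shortest_exists assms(4) by blast
  have Hg: "H g = lsmult (lam 0) g" using shortest_in_eigenvector[OF assms(3) g] .
  have "in_C_tm (period lam) g" unfolding in_C_tm_def
  proof
    fix j assume j: "j \<in> Poly_Mapping.keys g"
    have "lam j * lcoeff g j = lam 0 * lcoeff g j"
      using arg_cong[OF Hg, of "\<lambda>p. lcoeff p j"] by (simp add: lcoeff_H)
    then have "lam 0 = lam j" using j by (simp add: in_keys_iff)
    from S_period_dvd_of_eq[OF lam_in_S assms(2) this] have "int (period lam) dvd j" by simp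
    moreover have "j \<ge> 0" using shortest_in_keys[OF g] j by auto
    ultimately show "0 \<le> j \<and> int (period lam) dvd j" by simp
  qed
  with that g Hg laurent_ideal_eq_multiples_shortest[OF ideal g] show ?thesis by blast
qed

lemma submodule_eq_multiples_eigenvector:
  assumes "\<forall>j. lam j + z \<noteq> 0" "period lam \<noteq> 0" "Hf_submodule X Y H W" "W \<noteq> {0}"
  shows "\<exists>g. g \<noteq> 0 \<and> in_C_tm (period lam) g \<and> h_eigenvector H g \<and> W = {p * g | p. True}"
proof -
  obtain g n where "shortest_in W g n" "H g = lsmult (lam 0) g" "in_C_tm (period lam) g"
    "W = {p * g | p. True}"
    using submodule_principal_eigen[OF assms] .
  then show ?thesis unfolding h_eigenvector_def shortest_in_def by blast
qed

text \<open>Write the generator g as G(t^m). A root r of G gives a factor t^m - r of g, and the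
  multiples of t^m - r form a proper submodule containing W; G cannot be constant since W is
  proper, and r is nonzero since G(0) = g_0 is.\<close>

lemma maximal_submodule_eq_multiples:
  assumes nonzero: "\<forall>j. lam j + z \<noteq> 0" and periodic: "period lam \<noteq> 0"
    and max: "maximal_proper_nonzero_submodule X Y H W"
  shows "\<exists>r. r \<noteq> 0 \<and> W = {p * (lt (int (period lam)) - lsmult r (lt 0)) | p. True}"
proof -
  let ?m = "period lam"
  have W: "Hf_submodule X Y H W" "W \<noteq> {0}" "W \<noteq> UNIV"
    using max unfolding maximal_proper_nonzero_submodule_def by auto
  obtain g n where g: "shortest_in W g n" "in_C_tm ?m g" "W = {p * g | p. True}"
    using submodule_principal_eigen[OF nonzero periodic W(1,2)] by metis
  obtain G where G: "g = laurent_of_poly ?m G" "coeff G 0 = lcoeff g 0"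
    using in_C_tm_laurent_of_poly[OF _ g(2)] periodic by blast
  have "coeff G 0 \<noteq> 0" using G(2) shortest_in_lcoeff_0[OF g(1)] by simp
  have "\<not> (\<exists>c l. c \<noteq> 0 \<and> l = 0 \<and> G = pCons c l)"
  proof
    assume "\<exists>c l. c \<noteq> 0 \<and> l = 0 \<and> G = pCons c l"
    then obtain c where "c \<noteq> 0" "g = lsmult c 1" by (auto simp: G(1) laurent_of_poly_def lt_0)
    then have "p = lsmult (1 / c) p * g" for p
      by (simp add: lsmult_eq_single_mult mult_single ac_simps)
    then show False using W(3) g(3) by blast
  qed
  then obtain r where "poly G r = 0" using fundamental_theorem_of_algebra_alt by blast
  then obtain Q where GQ: "G = [:- r, 1:] * Q" by (auto simp: poly_eq_0_iff_dvd dvd_def)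
  have "r \<noteq> 0" using \<open>poly G r = 0\<close> \<open>coeff G 0 \<noteq> 0\<close> by (auto simp: poly_0_coeff_0)
  define U where "U = {p * (lt (int ?m) - lsmult r (lt 0)) | p. True}"
  have "g \<in> U" unfolding U_def G(1) GQ laurent_of_poly_linear_factor by blast
  then have "W \<subseteq> U" unfolding U_def g(3) by (auto simp: mult.assoc)
  moreover have "Hf_submodule X Y H U" unfolding U_def by (rule submodule_multiples_lt_period_minus)
  moreover have "1 \<notin> U"
    using one_notin_multiples_lt_minus[OF \<open>r \<noteq> 0\<close>, of "int ?m"] periodic by (simp add: U_def)
  then have "U \<noteq> UNIV" by blast
  ultimately have "U = W" using max unfolding maximal_proper_nonzero_submodule_def by blast
  then show ?thesis using \<open>r \<noteq> 0\<close> unfolding U_def by blast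
qed

end

lemma laurent_weight_module_A:
  "lam \<in> S f \<Longrightarrow>
    laurent_weight_module f (A_x lam z) (A_y lam z) (A_h lam) (\<lambda>_. 1) (\<lambda>j. lam j + z) lam z"
  by unfold_locales (auto simp: lcoeff_A_x lcoeff_A_y lcoeff_A_h)

lemma laurent_weight_module_B:
  "lam \<in> S f \<Longrightarrow>
    laurent_weight_module f (B_x lam z) (B_y lam z) (B_h lam) (\<lambda>j. lam j + z) (\<lambda>_. 1) lam z"
  by unfold_locales (auto simp: lcoeff_B_x lcoeff_B_y lcoeff_B_h)

theorem lemma7:
  fixes f :: "complex poly" and lam :: "int \<Rightarrow> complex" and z :: complex
  assumes "lam \<in> S f"
  shows "(Hf_module f (A_x lam z) (A_y lam z) (A_h lam) \<and> Hf_module f (B_x lam z) (B_y lam z) (B_h lam))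
    \<and> (simple_Hf_module f (A_x lam z) (A_y lam z) (A_h lam) \<longleftrightarrow>
           (\<forall>i. lam i + z \<noteq> 0) \<and> period lam = 0)
    \<and> (simple_Hf_module f (B_x lam z) (B_y lam z) (B_h lam) \<longleftrightarrow>
           (\<forall>i. lam i + z \<noteq> 0) \<and> period lam = 0)
    \<and> ((\<forall>i. lam i + z \<noteq> 0) \<and> period lam \<noteq> 0 \<longrightarrow>
        (\<forall>W. Hf_submodule (A_x lam z) (A_y lam z) (A_h lam) W \<and> W \<noteq> {0} \<longrightarrow>
             (\<exists>g. g \<noteq> 0 \<and> in_C_tm (period lam) g \<and> h_eigenvector (A_h lam) g \<and>
                  W = {p * g | p. True}))
      \<and> (\<forall>W. Hf_submodule (B_x lam z) (B_y lam z) (B_h lam) W \<and> W \<noteq> {0} \<longrightarrow>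
             (\<exists>g. g \<noteq> 0 \<and> in_C_tm (period lam) g \<and> h_eigenvector (B_h lam) g \<and>
                  W = {p * g | p. True}))
      \<and> (\<forall>W. maximal_proper_nonzero_submodule (A_x lam z) (A_y lam z) (A_h lam) W \<longrightarrow>
             (\<exists>a. a \<noteq> 0 \<and> W = {p * (lt (int (period lam)) - lsmult a (lt 0)) | p. True})))"
proof -
  interpret A: laurent_weight_module f "A_x lam z" "A_y lam z" "A_h lam"
      "\<lambda>_. 1" "\<lambda>j. lam j + z" lam z
    using assms by (rule laurent_weight_module_A)
  interpret B: laurent_weight_module f "B_x lam z" "B_y lam z" "B_h lam"
      "\<lambda>j. lam j + z" "\<lambda>_. 1" lam z
    using assms by (rule laurent_weight_module_B)
  show ?thesis
    using A.Hf_module B.Hf_module A.simple_iff B.simple_iff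
      A.submodule_eq_multiples_eigenvector B.submodule_eq_multiples_eigenvector
      A.maximal_submodule_eq_multiples
    by blast
qed

end
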